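(* Let $G$ be a graph, let $\mathcal P$ be a set of pairwise distinguishable $(k+1)$-profiles of $G$ with $k=\kappa(\mathcal P,G)$, and let $(A_1,A_2),(B_1,B_2)\in\mathcal R(k,\mathcal P)$. Then there are two opposite corner separations of $(A_1,A_2)$ and $(B_1,B_2)$ that both lie in $\mathcal R(k,\mathcal P)$.
   Context: A separation of $G$ is an ordered pair $(A,B)$ of subsets of $V(G)$ with $A\cup B=V(G)$ and no edge between $A\setminus B$ and $B\setminus A$; its order is $|A\cap B|$. $(A,B)\le(C,D)$ means $A\subseteq C$, $D\subseteq B$. A profile is a set $P$ of separations with (P1) if $(C,D)\le(A,B)\in P$ then $(D,C)\notin P$, and (P2) if $(A,B),(C,D)\in P$ then $(B\cap D,A\cup C)\notin P$. For $\ell\in\mathbb N$, $P$ is an $\ell$-profile if all its separations have order $<\ell$ and for each separation $(A,B)$ of order $<\ell$, $(A,B)\in P$ or $(B,A)\in P$. A separation $(A,B)$ distinguishes profiles $P,P'$ if $(A,B)\in P,(B,A)\in P'$ or vice versa. $\kappa(\mathcal P,G)$ is the minimum order of a separation distinguishing two profiles of $\mathcal P$. $\mathcal R(k,\mathcal P)$ is the set of separations of finite order at most $k$ distinguishing two profiles of $\mathcal P$. For $\{E,E'\}=\{A_1,A_2\}$, $\{F,F'\}=\{B_1,B_2\}$ the corner separation of $E\cap F$ is $(E\cap F,E'\cup F')$; the corner separations $(E\cap F,E'\cup F')$ and $(E\cup F,E'\cap F')$ are called opposite. *)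

theory Defs
  imports Main
begin

text \<open>A graph is given by a vertex set V and a symmetric edge relation E \<subseteq> V \<times> V.
  Separations are pairs of vertex sets; the order |A \<inter> B| is only meaningful when finite.\<close>

definition is_graph :: "'a set \<Rightarrow> ('a \<times> 'a) set \<Rightarrow> bool" where
  "is_graph V E \<longleftrightarrow> E \<subseteq> V \<times> V \<and> sym E"

definition separation :: "'a set \<Rightarrow> ('a \<times> 'a) set \<Rightarrow> 'a set \<times> 'a set \<Rightarrow> bool" where
  "separation V E S \<longleftrightarrow> (case S of (A, B) \<Rightarrow>
     A \<union> B = V \<and>
     (\<forall>x y. (x, y) \<in> E \<longrightarrow> \<not> (x \<in> A - B \<and> y \<in> B - A) \<and> \<not> (x \<in> B - A \<and> y \<in> A - B)))"

definition sep_le :: "'a set \<times> 'a set \<Rightarrow> 'a set \<times> 'a set \<Rightarrow> bool" where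
  "sep_le S T \<longleftrightarrow> fst S \<subseteq> fst T \<and> snd T \<subseteq> snd S"

definition inv_sep :: "'a set \<times> 'a set \<Rightarrow> 'a set \<times> 'a set" where
  "inv_sep S = (snd S, fst S)"

definition order_less :: "'a set \<times> 'a set \<Rightarrow> nat \<Rightarrow> bool" where
  "order_less S l \<longleftrightarrow> finite (fst S \<inter> snd S) \<and> card (fst S \<inter> snd S) < l"

definition order_le :: "'a set \<times> 'a set \<Rightarrow> nat \<Rightarrow> bool" where
  "order_le S k \<longleftrightarrow> finite (fst S \<inter> snd S) \<and> card (fst S \<inter> snd S) \<le> k"

definition is_profile :: "('a set \<times> 'a set) set \<Rightarrow> bool" where
  "is_profile P \<longleftrightarrow>
     (\<forall>A B C D. sep_le (C, D) (A, B) \<and> (A, B) \<in> P \<longrightarrow> (D, C) \<notin> P) \<and>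
     (\<forall>A B C D. (A, B) \<in> P \<and> (C, D) \<in> P \<longrightarrow> (B \<inter> D, A \<union> C) \<notin> P)"

definition is_l_profile :: "'a set \<Rightarrow> ('a \<times> 'a) set \<Rightarrow> nat \<Rightarrow> ('a set \<times> 'a set) set \<Rightarrow> bool" where
  "is_l_profile V E l P \<longleftrightarrow> is_profile P \<and>
     (\<forall>S\<in>P. separation V E S \<and> order_less S l) \<and>
     (\<forall>S. separation V E S \<and> order_less S l \<longrightarrow> S \<in> P \<or> inv_sep S \<in> P)"

definition distinguishes :: "'a set \<times> 'a set \<Rightarrow> ('a set \<times> 'a set) set \<Rightarrow> ('a set \<times> 'a set) set \<Rightarrow> bool" where
  "distinguishes S P P' \<longleftrightarrow> (S \<in> P \<and> inv_sep S \<in> P') \<or> (inv_sep S \<in> P \<and> S \<in> P')"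

definition pairwise_distinguishable :: "'a set \<Rightarrow> ('a \<times> 'a) set \<Rightarrow> ('a set \<times> 'a set) set set \<Rightarrow> bool" where
  "pairwise_distinguishable V E \<P> \<longleftrightarrow>
     (\<forall>P\<in>\<P>. \<forall>P'\<in>\<P>. P \<noteq> P' \<longrightarrow> (\<exists>S. separation V E S \<and> distinguishes S P P'))"

definition kappa :: "'a set \<Rightarrow> ('a \<times> 'a) set \<Rightarrow> ('a set \<times> 'a set) set set \<Rightarrow> nat" where
  "kappa V E \<P> = (LEAST n. \<exists>S P P'. separation V E S \<and> P \<in> \<P> \<and> P' \<in> \<P> \<and>
      distinguishes S P P' \<and> finite (fst S \<inter> snd S) \<and> card (fst S \<inter> snd S) = n)"

definition R_set :: "'a set \<Rightarrow> ('a \<times> 'a) set \<Rightarrow> nat \<Rightarrow> ('a set \<times> 'a set) set set \<Rightarrow> ('a set \<times> 'a set) set" where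
  "R_set V E k \<P> = {S. separation V E S \<and> order_le S k \<and>
      (\<exists>P\<in>\<P>. \<exists>P'\<in>\<P>. distinguishes S P P')}"

end

theory Submission
  imports Defs
begin

(* Both given separations have order exactly k = kappa, and two profiles of the family orient
   both of them oppositely.  By submodularity the orders of two opposite corner separations add
   up to 2k.  A corner of order at most k is oriented by both profiles, and then (P1) in one
   profile and (P2) in the other force it to distinguish them, so its order is at least k.
   One of the two opposite corners has order at most k, hence both have order exactly k. *)

lemma separation_swap: "separation V E (A, B) \<Longrightarrow> separation V E (B, A)"
  unfolding separation_def by auto

lemma separation_corner:
  assumes "separation V E (A1, A2)" "separation V E (B1, B2)"
  shows "separation V E (A1 \<inter> B1, A2 \<union> B2)"
  using assms unfolding separation_def by (simp, blast)

lemma card_corner_orders: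
  assumes "finite (A1 \<inter> A2)" "finite (B1 \<inter> B2)" "A1 \<union> A2 = B1 \<union> B2"
  shows "card ((A1 \<inter> B1) \<inter> (A2 \<union> B2)) + card ((A1 \<union> B1) \<inter> (A2 \<inter> B2))
         = card (A1 \<inter> A2) + card (B1 \<inter> B2)"
proof -
  let ?X = "(A1 \<inter> B1) \<inter> (A2 \<union> B2)" and ?Y = "(A1 \<union> B1) \<inter> (A2 \<inter> B2)"
  have "?X \<union> ?Y = (A1 \<inter> A2) \<union> (B1 \<inter> B2)" and "?X \<inter> ?Y = (A1 \<inter> A2) \<inter> (B1 \<inter> B2)"
    using assms(3) by blast+
  moreover have "finite ?X" "finite ?Y"
    using assms(1,2) by (auto intro: finite_subset[of _ "(A1 \<inter> A2) \<union> (B1 \<inter> B2)"])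
  ultimately show ?thesis
    using card_Un_Int[of ?X ?Y] card_Un_Int[OF assms(1,2)] by simp
qed

lemma kappa_le_order:
  assumes "separation V E S" "P \<in> \<P>" "P' \<in> \<P>" "distinguishes S P P'" "finite (fst S \<inter> snd S)"
  shows "kappa V E \<P> \<le> card (fst S \<inter> snd S)"
  unfolding kappa_def by (rule Least_le) (use assms in blast)

lemma R_set_kappa_order:
  assumes "S \<in> R_set V E (kappa V E \<P>) \<P>"
  shows "finite (fst S \<inter> snd S)" and "card (fst S \<inter> snd S) = kappa V E \<P>"
proof -
  from assms obtain P P' where "separation V E S" "P \<in> \<P>" "P' \<in> \<P>" "distinguishes S P P'"
    and "order_le S (kappa V E \<P>)"
    unfolding R_set_def by blast
  then show "finite (fst S \<inter> snd S)" "card (fst S \<inter> snd S) = kappa V E \<P>"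
    using kappa_le_order by (fastforce simp: order_le_def)+
qed

lemma R_set_swap: "(A, B) \<in> R_set V E k \<P> \<Longrightarrow> (B, A) \<in> R_set V E k \<P>"
  unfolding R_set_def order_le_def distinguishes_def inv_sep_def
  by (auto simp: Int_commute dest: separation_swap)

lemma l_profile_orients:
  assumes "is_l_profile V E l P" "separation V E (A, B)" "order_less (A, B) l"
  shows "(A, B) \<in> P \<or> (B, A) \<in> P"
  using assms unfolding is_l_profile_def inv_sep_def by auto

lemma corner_distinguishes:
  assumes P: "is_l_profile V E l P" and P': "is_l_profile V E l P'"
    and "separation V E (A1, A2)" "separation V E (B1, B2)"
    and "(A1, A2) \<in> P" "(A2, A1) \<in> P'" "(B2, B1) \<in> P'"
    and "order_less (A1 \<inter> B1, A2 \<union> B2) l"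
  shows "distinguishes (A1 \<inter> B1, A2 \<union> B2) P P'"
proof -
  have sep: "separation V E (A1 \<inter> B1, A2 \<union> B2)"
    using assms(3,4) by (rule separation_corner)
  have "sep_le (A1 \<inter> B1, A2 \<union> B2) (A1, A2)"
    by (auto simp: sep_le_def)
  then have "(A2 \<union> B2, A1 \<inter> B1) \<notin> P"
    using P \<open>(A1, A2) \<in> P\<close> unfolding is_l_profile_def is_profile_def by blast
  moreover have "(A1 \<inter> B1, A2 \<union> B2) \<notin> P'"
    using P' \<open>(A2, A1) \<in> P'\<close> \<open>(B2, B1) \<in> P'\<close> unfolding is_l_profile_def is_profile_def by blast
  ultimately show ?thesis
    using l_profile_orients[OF P sep] l_profile_orients[OF P' sep] assms(8)
    by (auto simp: distinguishes_def inv_sep_def)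
qed

lemma corner_in_R_set:
  assumes P: "is_l_profile V E (k + 1) P" and P': "is_l_profile V E (k + 1) P'"
    and "P \<in> \<P>" "P' \<in> \<P>"
    and sepA: "separation V E (A1, A2)" and sepB: "separation V E (B1, B2)"
    and "(A1, A2) \<in> P" "(A2, A1) \<in> P'" "(B2, B1) \<in> P'"
    and order: "order_le (A1 \<inter> B1, A2 \<union> B2) k"
  shows "(A1 \<inter> B1, A2 \<union> B2) \<in> R_set V E k \<P>"
proof -
  have "order_less (A1 \<inter> B1, A2 \<union> B2) (k + 1)"
    using order by (simp add: order_le_def order_less_def)
  then have "distinguishes (A1 \<inter> B1, A2 \<union> B2) P P'"
    using corner_distinguishes[OF P P' sepA sepB] assms(7-9) by blast
  then show ?thesis
    using separation_corner[OF sepA sepB] order \<open>P \<in> \<P>\<close> \<open>P' \<in> \<P>\<close>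
    unfolding R_set_def by blast
qed

lemma corners_in_R_set:
  assumes profiles: "\<forall>P\<in>\<P>. is_l_profile V E (k + 1) P" and k: "k = kappa V E \<P>"
    and A: "(A1, A2) \<in> R_set V E k \<P>" and B: "(B1, B2) \<in> R_set V E k \<P>"
    and "P \<in> \<P>" "P' \<in> \<P>"
    and "(A1, A2) \<in> P" "(B1, B2) \<in> P" "(A2, A1) \<in> P'" "(B2, B1) \<in> P'"
  shows "(A1 \<inter> B1, A2 \<union> B2) \<in> R_set V E k \<P> \<and> (A1 \<union> B1, A2 \<inter> B2) \<in> R_set V E k \<P>"
proof -
  let ?X = "(A1 \<inter> B1, A2 \<union> B2)" and ?Y = "(A2 \<inter> B2, A1 \<union> B1)"
  let ?x = "card (fst ?X \<inter> snd ?X)" and ?y = "card (fst ?Y \<inter> snd ?Y)"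
  have lP: "is_l_profile V E (k + 1) P" and lP': "is_l_profile V E (k + 1) P'"
    using profiles \<open>P \<in> \<P>\<close> \<open>P' \<in> \<P>\<close> by auto
  have sepA: "separation V E (A1, A2)" and sepB: "separation V E (B1, B2)"
    using A B by (auto simp: R_set_def)
  have finA: "finite (A1 \<inter> A2)" and cardA: "card (A1 \<inter> A2) = k"
    using R_set_kappa_order[of "(A1, A2)"] A k by auto
  have finB: "finite (B1 \<inter> B2)" and cardB: "card (B1 \<inter> B2) = k"
    using R_set_kappa_order[of "(B1, B2)"] B k by auto
  have finX: "finite (fst ?X \<inter> snd ?X)" and finY: "finite (fst ?Y \<inter> snd ?Y)"
    using finA finB by (auto intro: finite_subset[of _ "(A1 \<inter> A2) \<union> (B1 \<inter> B2)"])
  have sum: "?x + ?y = k + k"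
    using card_corner_orders[OF finA finB] sepA sepB cardA cardB
    by (simp add: separation_def Int_commute)
  have X: "?X \<in> R_set V E k \<P>" if "?x \<le> k"
    using corner_in_R_set[OF lP lP' \<open>P \<in> \<P>\<close> \<open>P' \<in> \<P>\<close> sepA sepB] assms(7,9,10) finX that
    by (simp add: order_le_def)
  have Y: "?Y \<in> R_set V E k \<P>" if "?y \<le> k"
    using corner_in_R_set[OF lP' lP \<open>P' \<in> \<P>\<close> \<open>P \<in> \<P>\<close>
        sepA[THEN separation_swap] sepB[THEN separation_swap]] assms(7-9) finY that
    by (simp add: order_le_def)
  have "?x = k" if "?x \<le> k"
    using R_set_kappa_order(2)[OF X[OF that, unfolded k]] k by simp
  moreover have "?y = k" if "?y \<le> k"
    using R_set_kappa_order(2)[OF Y[OF that, unfolded k]] k by simp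
  ultimately have "?x \<le> k" "?y \<le> k"
    using sum by presburger+
  then show ?thesis
    using X Y R_set_swap by blast
qed

lemma R_set_oriented:
  assumes "is_l_profile V E (k + 1) P" "S \<in> R_set V E k \<P>"
  shows "S \<in> P \<or> inv_sep S \<in> P"
  using assms unfolding is_l_profile_def R_set_def order_le_def order_less_def by (cases S) auto

lemma distinguished_by_common_pair:
  assumes orients: "\<forall>R\<in>\<P>. (S \<in> R \<or> inv_sep S \<in> R) \<and> (T \<in> R \<or> inv_sep T \<in> R)"
    and "\<exists>P\<in>\<P>. \<exists>P'\<in>\<P>. distinguishes S P P'" and "\<exists>Q\<in>\<P>. \<exists>Q'\<in>\<P>. distinguishes T Q Q'"
  shows "\<exists>R\<in>\<P>. \<exists>R'\<in>\<P>. distinguishes S R R' \<and> distinguishes T R R'"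
proof -
  obtain P P' where P: "P \<in> \<P>" "P' \<in> \<P>" "S \<in> P" "inv_sep S \<in> P'"
    using assms(2) unfolding distinguishes_def by blast
  obtain Q Q' where Q: "Q \<in> \<P>" "Q' \<in> \<P>" "T \<in> Q" "inv_sep T \<in> Q'"
    using assms(3) unfolding distinguishes_def by blast
  show ?thesis
  proof (cases "distinguishes T P P'")
    case True
    with P show ?thesis by (auto simp: distinguishes_def)
  next
    case False
    then consider "T \<in> P" "T \<in> P'" | "inv_sep T \<in> P" "inv_sep T \<in> P'"
      using orients P unfolding distinguishes_def by blast
    then show ?thesis
    proof cases
      case 1
      then show ?thesis
        using orients P Q unfolding distinguishes_def by (cases "S \<in> Q'") blast+
    next
      case 2
      then show ?thesis
        using orients P Q unfolding distinguishes_def by (cases "S \<in> Q") blast+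
    qed
  qed
qed

theorem lemma2p6:
  fixes V :: "'a set" and E :: "('a \<times> 'a) set"
    and \<P> :: "('a set \<times> 'a set) set set" and k :: nat
    and A1 A2 B1 B2 :: "'a set"
  assumes "is_graph V E"
    and "\<forall>P\<in>\<P>. is_l_profile V E (k + 1) P"
    and "pairwise_distinguishable V E \<P>"
    and "k = kappa V E \<P>"
    and "(A1, A2) \<in> R_set V E k \<P>"
    and "(B1, B2) \<in> R_set V E k \<P>"
  shows "\<exists>E1 E2 F1 F2. (E1, E2) \<in> {(A1, A2), (A2, A1)} \<and> (F1, F2) \<in> {(B1, B2), (B2, B1)} \<and>
           (E1 \<inter> F1, E2 \<union> F2) \<in> R_set V E k \<P> \<and>
           (E1 \<union> F1, E2 \<inter> F2) \<in> R_set V E k \<P>"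
proof -
  note profiles = assms(2) and k = assms(4) and AB = assms(5,6)
  have "\<forall>R\<in>\<P>. ((A1, A2) \<in> R \<or> inv_sep (A1, A2) \<in> R) \<and> ((B1, B2) \<in> R \<or> inv_sep (B1, B2) \<in> R)"
    using profiles AB R_set_oriented by blast
  moreover have "\<exists>P\<in>\<P>. \<exists>P'\<in>\<P>. distinguishes (A1, A2) P P'"
    and "\<exists>Q\<in>\<P>. \<exists>Q'\<in>\<P>. distinguishes (B1, B2) Q Q'"
    using AB unfolding R_set_def by blast+
  ultimately obtain R R' where R: "R \<in> \<P>" "R' \<in> \<P>"
    and "distinguishes (A1, A2) R R'" "distinguishes (B1, B2) R R'"
    by (blast dest: distinguished_by_common_pair)
  then obtain E1 E2 F1 F2
    where EF: "(E1, E2) \<in> {(A1, A2), (A2, A1)}" "(F1, F2) \<in> {(B1, B2), (B2, B1)}"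
      and "(E1, E2) \<in> R" "(F1, F2) \<in> R" "(E2, E1) \<in> R'" "(F2, F1) \<in> R'"
    unfolding distinguishes_def inv_sep_def by auto
  moreover have "(E1, E2) \<in> R_set V E k \<P>" "(F1, F2) \<in> R_set V E k \<P>"
    using EF AB R_set_swap by auto
  ultimately have "(E1 \<inter> F1, E2 \<union> F2) \<in> R_set V E k \<P> \<and> (E1 \<union> F1, E2 \<inter> F2) \<in> R_set V E k \<P>"
    using corners_in_R_set[OF profiles k] R by blast
  with EF show ?thesis by blast
qed

end
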